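(* Assume (A1) with $p\in(1,2]$, and that $\mathscr V^*=\mathscr V^*_1\cup\mathscr V^*_2$ with $\mathscr V^*_1,\mathscr V^*_2$ disjoint, compact, convex, with smooth boundaries. Let $\vartheta\ge\ell\operatorname{diam}(\mathscr V^* )^p-\underline f$. Then for every $v\in\mathbb R^d$: $$A(w,v)-A(V^*_1(v),v)\ge\|w-V^*_1(v)\|_2^2-2\Big(\frac{2^p\varkappa}{\ell^2}\Big)^{\frac1{p-1}}\quad\text{for all }w\in\mathcal Z_1,$$ $$A(w,v)-A(V^*_2(v),v)\ge\|w-V^*_2(v)\|_2^2-2\Big(\frac{2^p\varkappa}{\ell^2}\Big)^{\frac1{p-1}}\quad\text{for all }w\in\mathcal Z_2.$$
   Context: $f:\mathbb R^d\to\mathbb R$ continuous, $\underline f:=\inf f>-\infty$, $\mathscr V^*$ the set of global minimizers, $\operatorname{dist}(w,\mathscr V^* )$ Euclidean distance, $\operatorname{diam}(\mathscr V^* )=\sup_{v,w\in\mathscr V^*}\|v-w\|_2$. (A1): there are $\ell>0$, $p\in[1,2]$ with $f(w)-\underline f\ge\ell\operatorname{dist}(w,\mathscr V^* )^p$ for all $w$. $A(w,v):=\frac1\varkappa f(w)(f(v)+\vartheta)+\|v-w\|_2^2$ with $\varkappa>0$. $V^*_i(v):=\arg\min_{w\in\mathscr V^*_i}\|v-w\|_2$, $\mathcal Z_1:=\{v:\operatorname{dist}(v,\mathscr V^*_1)<\operatorname{dist}(v,\mathscr V^*_2)\}$, $\mathcal Z_2:=\{v:\operatorname{dist}(v,\mathscr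 V^*_2)<\operatorname{dist}(v,\mathscr V^*_1)\}$. *)

theory Defs
  imports "HOL-Analysis.Analysis"
begin

fun Ck_on :: "nat \<Rightarrow> 'a::real_normed_vector set \<Rightarrow> ('a \<Rightarrow> real) \<Rightarrow> bool" where
  "Ck_on 0 U g = continuous_on U g"
| "Ck_on (Suc k) U g =
     (\<exists>g'. (\<forall>x\<in>U. (g has_derivative g' x) (at x)) \<and> (\<forall>v. Ck_on k U (\<lambda>x. g' x v)))"

definition smooth_on :: "'a::real_normed_vector set \<Rightarrow> ('a \<Rightarrow> real) \<Rightarrow> bool" where
  "smooth_on U g \<longleftrightarrow> (\<forall>k. Ck_on k U g)"

definition smooth_boundary :: "'a::real_normed_vector set \<Rightarrow> bool" where
  "smooth_boundary S \<longleftrightarrow>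
     (\<forall>x\<in>frontier S. \<exists>U g. open U \<and> x \<in> U \<and> smooth_on U g \<and>
        (\<forall>y\<in>U. \<exists>D. (g has_derivative D) (at y) \<and> D \<noteq> (\<lambda>_. 0)) \<and>
        S \<inter> U = {y\<in>U. g y \<le> 0})"

definition minimizers :: "('a \<Rightarrow> real) \<Rightarrow> 'a set" where
  "minimizers f = {w. f w = Inf (range f)}"

definition Afun :: "real \<Rightarrow> real \<Rightarrow> ('a::real_normed_vector \<Rightarrow> real) \<Rightarrow> 'a \<Rightarrow> 'a \<Rightarrow> real" where
  "Afun \<kappa> \<theta> f w v = (1 / \<kappa>) * f w * (f v + \<theta>) + (norm (v - w))\<^sup>2"

end

theory Submission
  imports Defs
begin

text \<open>Let S be the set of minimizers, m = inf f, u the projection of v onto V1, D = |v - u| and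
  d = dist(w, S) = dist(w, V1). Since f u = m,
  A(w,v) - A(u,v) = (f w - m)(f v + \<theta>)/\<kappa> + 2<v - u, u - w> + |w - u|^2.
  The growth condition gives f w - m \<ge> \<ell> d^p; the choice of \<theta>, the bound D \<le> dist(v, S) + diam S
  and convexity of t^p give f v + \<theta> \<ge> \<ell> 2^(1-p) D^p; and projecting onto the convex set V1 gives
  <v - u, u - w> \<ge> -D d. With x = dD and K = \<ell>^2/(2^p \<kappa>) the difference is therefore at least
  |w - u|^2 - 2(x - K x^p), and x - K x^p \<le> K^(-1/(p-1)) for all x \<ge> 0.\<close>

lemma powr_add_le_two_powr:
  fixes a b p :: real
  assumes "a \<ge> 0" "b \<ge> 0" "p \<ge> 1"
  shows "(a + b) powr p \<le> 2 powr (p - 1) * (a powr p + b powr p)"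
proof (cases "a = 0 \<or> b = 0")
  case True
  have "1 \<le> (2::real) powr (p - 1)" using assms by (intro ge_one_powr_ge_zero) auto
  moreover have "a powr p \<ge> 0" "b powr p \<ge> 0" by simp_all
  ultimately show ?thesis using True
    by (auto simp: mult_le_cancel_right1 intro: order_trans[OF _ mult_right_mono])
next
  case False
  with assms have "a > 0" "b > 0" by auto
  then have midpoint: "((a + b) / 2) powr p \<le> (a powr p + b powr p) / 2"
    using convex_onD[OF powr_convex[OF assms(3)], of "1/2" a b] by (simp add: field_simps)
  have "(a + b) powr p = (2 * ((a + b) / 2)) powr p"
    by (rule arg_cong[where f = "\<lambda>t. t powr p"]) simp
  also have "\<dots> = 2 powr p * ((a + b) / 2) powr p"
    by (rule powr_mult)
  also have "\<dots> \<le> 2 powr p * ((a powr p + b powr p) / 2)"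
    using midpoint by (intro mult_left_mono) auto
  also have "\<dots> = 2 powr (p - 1) * (a powr p + b powr p)"
    by (simp add: powr_diff)
  finally show ?thesis .
qed

lemma diff_mult_powr_le:
  fixes K x p :: real
  assumes "K > 0" "p > 1" "x \<ge> 0"
  shows "x - K * x powr p \<le> (1 / K) powr (1 / (p - 1))"
proof (cases "x \<le> (1 / K) powr (1 / (p - 1))")
  case True
  then show ?thesis using assms by (smt (verit) mult_nonneg_nonneg powr_ge_zero)
next
  case False
  define C where "C = (1 / K) powr (1 / (p - 1))"
  have "C > 0" using assms by (simp add: C_def)
  with False have "x > 0" unfolding C_def by linarith
  have "1 / K = C powr (p - 1)"
    using assms by (simp add: C_def powr_powr)
  also have "\<dots> \<le> x powr (p - 1)"
    using False \<open>C > 0\<close> assms by (intro powr_mono2) (auto simp: C_def)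
  finally have "1 \<le> K * x powr (p - 1)"
    using assms by (simp add: field_simps)
  then have "x \<le> K * x powr (p - 1) * x"
    using \<open>x > 0\<close> by simp
  also have "\<dots> = K * x powr p"
    using \<open>x > 0\<close> by (simp add: powr_diff)
  finally have "x \<le> K * x powr p" .
  then show ?thesis using \<open>C > 0\<close> unfolding C_def by linarith
qed

lemma infdist_eq_dist_closest_point:
  assumes "closed S" "S \<noteq> {}"
  shows "infdist x S = dist x (closest_point S x)"
  using assms by (simp add: infdist_eq_setdist setdist_closest_point)

lemma inner_closest_point_ge:
  fixes v w q :: "'a::euclidean_space"
  assumes "convex S" "closed S" "q \<in> S"
  shows "inner (v - closest_point S v) (closest_point S v - w)
           \<ge> - (norm (v - closest_point S v) * norm (w - q))"
proof -
  let ?u = "closest_point S v"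
  have "inner (v - ?u) (q - ?u) \<le> 0"
    using assms by (rule closest_point_dot)
  moreover have "\<bar>inner (v - ?u) (q - w)\<bar> \<le> norm (v - ?u) * norm (w - q)"
    using Cauchy_Schwarz_ineq2[of "v - ?u" "q - w"] by (simp add: norm_minus_commute)
  moreover have "inner (v - ?u) (?u - w) = inner (v - ?u) (q - w) - inner (v - ?u) (q - ?u)"
    by (simp add: inner_diff_right)
  ultimately show ?thesis by linarith
qed

lemma dist_closest_point_le_infdist_add_diameter:
  fixes v :: "'a::euclidean_space"
  assumes "closed V" "V \<noteq> {}" "V \<subseteq> S" "compact S"
  shows "dist v (closest_point V v) \<le> infdist v S + diameter S"
proof -
  obtain y where "y \<in> V" using assms(2) by blast
  obtain z where z: "z \<in> S" "infdist v S = dist v z"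
    using infdist_attains_inf[of S v] assms compact_imp_closed by blast
  have "dist v (closest_point V v) \<le> dist v y"
    using assms(1) \<open>y \<in> V\<close> by (rule closest_point_le)
  also have "\<dots> \<le> dist v z + dist z y"
    by (rule dist_triangle)
  also have "dist z y \<le> diameter S"
    using diameter_bounded_bound[OF compact_imp_bounded[OF assms(4)] z(1)] \<open>y \<in> V\<close> assms(3)
    by blast
  finally show ?thesis using z(2) by simp
qed

lemma Afun_diff_eq:
  fixes u v w :: "'a::real_inner"
  shows "Afun \<kappa> \<theta> f w v - Afun \<kappa> \<theta> f u v
           = (1 / \<kappa>) * (f w - f u) * (f v + \<theta>) + 2 * inner (v - u) (u - w) + (norm (w - u))\<^sup>2"
proof -
  have "(norm (v - w))\<^sup>2 - (norm (v - u))\<^sup>2 = 2 * inner (v - u) (u - w) + (norm (w - u))\<^sup>2"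
    by (simp add: power2_norm_eq_inner inner_diff algebra_simps inner_commute)
  then show ?thesis
    unfolding Afun_def by (simp add: algebra_simps)
qed

lemma shifted_value_ge_dist_closest_point:
  fixes f :: "'a::euclidean_space \<Rightarrow> real"
  assumes "ell > 0" "p \<ge> 1"
    and growth: "\<And>w. f w - Inf (range f) \<ge> ell * (infdist w (minimizers f)) powr p"
    and theta: "\<theta> \<ge> ell * (diameter (minimizers f)) powr p - Inf (range f)"
    and "compact (minimizers f)" "V \<subseteq> minimizers f" "closed V" "V \<noteq> {}"
  shows "f v + \<theta> \<ge> ell * 2 powr (1 - p) * dist v (closest_point V v) powr p"
proof -
  define a where "a = infdist v (minimizers f)"
  define b where "b = diameter (minimizers f)"
  have "a \<ge> 0" by (simp add: a_def infdist_nonneg)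
  have "b \<ge> 0"
    using assms(6,8) diameter_bounded_bound[OF compact_imp_bounded[OF assms(5)]]
    by (force simp: b_def)
  have "dist v (closest_point V v) powr p \<le> (a + b) powr p"
    using dist_closest_point_le_infdist_add_diameter[OF assms(7,8,6,5)] assms(2)
    by (intro powr_mono2) (auto simp: a_def b_def)
  also have "\<dots> \<le> 2 powr (p - 1) * (a powr p + b powr p)"
    using \<open>a \<ge> 0\<close> \<open>b \<ge> 0\<close> assms(2) by (rule powr_add_le_two_powr)
  finally have "2 powr (1 - p) * dist v (closest_point V v) powr p \<le> a powr p + b powr p"
    by (simp add: powr_diff field_simps)
  moreover have "f v + \<theta> \<ge> ell * (a powr p + b powr p)"
    using growth[of v] theta by (simp add: a_def b_def algebra_simps)
  ultimately show ?thesis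
    using \<open>ell > 0\<close> by (smt (verit, best) mult.assoc mult_left_mono)
qed

lemma Afun_diff_closest_point_ge:
  fixes f :: "'a::euclidean_space \<Rightarrow> real"
  assumes "ell > 0" "p > 1" "\<kappa> > 0"
    and growth: "\<And>w. f w - Inf (range f) \<ge> ell * (infdist w (minimizers f)) powr p"
    and theta: "\<theta> \<ge> ell * (diameter (minimizers f)) powr p - Inf (range f)"
    and "compact (minimizers f)" "V \<subseteq> minimizers f" "convex V" "closed V" "V \<noteq> {}"
    and nearest: "infdist w (minimizers f) = infdist w V"
  shows "Afun \<kappa> \<theta> f w v - Afun \<kappa> \<theta> f (closest_point V v) v
           \<ge> (norm (w - closest_point V v))\<^sup>2 - 2 * ((2 powr p * \<kappa> / ell\<^sup>2) powr (1 / (p - 1)))"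
proof -
  define u where "u = closest_point V v"
  define q where "q = closest_point V w"
  define D where "D = norm (v - u)"
  define d where "d = norm (w - q)"
  define K where "K = ell\<^sup>2 / (2 powr p * \<kappa>)"
  have "K > 0" using assms(1,3) by (simp add: K_def)
  have "u \<in> V" "q \<in> V" using assms(9,10) by (simp_all add: u_def q_def closest_point_in_set)
  then have fu: "f u = Inf (range f)" using assms(7) by (auto simp: minimizers_def)
  have fw: "f w - f u \<ge> ell * d powr p"
    using growth[of w] nearest infdist_eq_dist_closest_point[OF assms(9,10), of w]
    by (simp add: fu d_def q_def dist_norm)
  have fv: "f v + \<theta> \<ge> ell * 2 powr (1 - p) * D powr p"
    using shifted_value_ge_dist_closest_point[OF assms(1) _ growth theta assms(6,7,9,10)] assms(2)
    by (simp add: D_def u_def dist_norm)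
  have "(ell * d powr p) * (ell * 2 powr (1 - p) * D powr p) \<le> (f w - f u) * (f v + \<theta>)"
    using fw fv assms(1) by (intro mult_mono') auto
  moreover have "(ell * d powr p) * (ell * 2 powr (1 - p) * D powr p) = \<kappa> * (2 * K * (d * D) powr p)"
    using assms(3) by (simp add: K_def powr_mult powr_diff field_simps power2_eq_square)
  ultimately have "(1 / \<kappa>) * (f w - f u) * (f v + \<theta>) \<ge> 2 * K * (d * D) powr p"
    using assms(3) by (simp add: field_simps)
  moreover have "inner (v - u) (u - w) \<ge> - (d * D)"
    using inner_closest_point_ge[OF assms(8,9) \<open>q \<in> V\<close>, of v w] by (simp add: u_def D_def d_def mult.commute)
  moreover have "d * D - K * (d * D) powr p \<le> (2 powr p * \<kappa> / ell\<^sup>2) powr (1 / (p - 1))"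
    using diff_mult_powr_le[OF \<open>K > 0\<close> assms(2), of "d * D"] by (simp add: K_def D_def d_def)
  ultimately show ?thesis
    unfolding Afun_diff_eq u_def[symmetric] by linarith
qed

theorem mainTheorem11:
  fixes f :: "'a::euclidean_space \<Rightarrow> real"
    and V1 V2 :: "'a set"
    and ell p \<kappa> \<theta> :: real
  assumes cont: "continuous_on UNIV f"
    and bdd: "bdd_below (range f)"
    and l_pos: "ell > 0"
    and p_range: "1 < p" "p \<le> 2"
    and A1: "\<And>w. f w - Inf (range f) \<ge> ell * (infdist w (minimizers f)) powr p"
    and split: "minimizers f = V1 \<union> V2"
    and disj: "V1 \<inter> V2 = {}"
    and ne: "V1 \<noteq> {}" "V2 \<noteq> {}"
    and cpt: "compact V1" "compact V2"
    and cvx: "convex V1" "convex V2"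
    and smooth: "smooth_boundary V1" "smooth_boundary V2"
    and kappa_pos: "\<kappa> > 0"
    and theta: "\<theta> \<ge> ell * (diameter (minimizers f)) powr p - Inf (range f)"
  shows "\<forall>v. (\<forall>w. infdist w V1 < infdist w V2 \<longrightarrow>
              Afun \<kappa> \<theta> f w v - Afun \<kappa> \<theta> f (closest_point V1 v) v
                \<ge> (norm (w - closest_point V1 v))\<^sup>2
                   - 2 * ((2 powr p * \<kappa> / ell\<^sup>2) powr (1 / (p - 1))))
          \<and> (\<forall>w. infdist w V2 < infdist w V1 \<longrightarrow>
              Afun \<kappa> \<theta> f w v - Afun \<kappa> \<theta> f (closest_point V2 v) v
                \<ge> (norm (w - closest_point V2 v))\<^sup>2
                   - 2 * ((2 powr p * \<kappa> / ell\<^sup>2) powr (1 / (p - 1))))"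
proof -
  have cpt_min: "compact (minimizers f)" using cpt split by auto
  have "infdist w (minimizers f) = infdist w V1" if "infdist w V1 < infdist w V2" for w
    using that ne split by (simp add: infdist_Un_min)
  moreover have "infdist w (minimizers f) = infdist w V2" if "infdist w V2 < infdist w V1" for w
    using that ne split by (simp add: infdist_Un_min)
  ultimately show ?thesis
    using Afun_diff_closest_point_ge[OF l_pos p_range(1) kappa_pos A1 theta cpt_min]
      split cvx cpt ne by (simp add: compact_imp_closed)
qed

end
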